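(* Let $k\ge2$, $n\ge1$, $A=\{0<1<\cdots<k-1\}$, $v\in\Gamma_{k,n}$ and $\pi=\pi(v)=\bigcup_{i}\pi_{i}$ its standard permutation of $[k^{n}]$. Let $1\le m\le n$ and $e=\varepsilon_{1}\varepsilon_{2}\cdots\varepsilon_{m}\in A^{m}$. Then for every $x\in[k^{n}]$ whose $n$-digit base-$k$ representation has $e$ as a prefix, the $m$-string of $x$ (with respect to $\pi$) is $e$. Moreover the domain of $p_{e}=\pi_{\varepsilon_{1}}\pi_{\varepsilon_{2}}\cdots\pi_{\varepsilon_{m}}$ is the interval of all $x\in[k^{n}]$ whose $n$-digit base-$k$ representation begins with $e$. In particular, for $x\in[k^{n}]$ identified with its $n$-digit base-$k$ representation, $\mathrm{dom}\,p_{x}=\{x\}$.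
   Context: $[N]=\{0<\cdots<N-1\}$. $G\subseteq A^{k}$ is the set of words of length $k$ containing each letter of $A$ exactly once, and $\Gamma_{k,n}=G^{k^{n-1}}$. Standard permutation of $w\in A^{N}$: let $f(w)$ be the letters of $w$ in nondecreasing order; for each letter $a$, $\pi_{a}$ is the unique order-preserving injective partial map on $[N]$ with domain the positions (from $0$) of $a$ in $f(w)$ and range the positions of $a$ in $w$; $\pi(w)=\bigcup_{a}\pi_{a}$. Maps compose left to right. For $x\in[k^{n}]$ and $m\ge0$ there is a unique sequence $\varepsilon_{1},\dots,\varepsilon_{m}\in A$ such that $x\cdot\pi_{\varepsilon_{1}}\cdots\pi_{\varepsilon_{m}}$ is defined; the word $\varepsilon_{1}\cdots\varepsilon_{m}$ is called the $m$-string of $x$. *)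

theory Defs
  imports Main
begin

definition G :: "nat \<Rightarrow> nat list set" where
  "G k = {w. length w = k \<and> set w \<subseteq> {..<k} \<and> (\<forall>a<k. count_list w a = 1)}"

definition Gamma :: "nat \<Rightarrow> nat \<Rightarrow> nat list set" where
  "Gamma k n = {concat ws | ws. length ws = k ^ (n - 1) \<and> set ws \<subseteq> G k}"

definition positions :: "nat list \<Rightarrow> nat \<Rightarrow> nat list" where
  "positions w a = filter (\<lambda>i. w ! i = a) [0..<length w]"

text \<open>pi_a: the order-preserving partial map from the positions of a in the sorted
  word f(w) onto the positions of a in w.\<close>
definition pi_letter :: "nat list \<Rightarrow> nat \<Rightarrow> (nat \<rightharpoonup> nat)" where
  "pi_letter w a = map_of (zip (positions (sort w) a) (positions w a))"

definition std_perm :: "nat list \<Rightarrow> (nat \<rightharpoonup> nat)" where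
  "std_perm w = (\<lambda>x. if (\<exists>a. x \<in> dom (pi_letter w a))
                     then pi_letter w (SOME a. x \<in> dom (pi_letter w a)) x else None)"

text \<open>Left-to-right composition: x . pi_{e1} ... pi_{em}.\<close>
definition path :: "nat list \<Rightarrow> nat list \<Rightarrow> (nat \<rightharpoonup> nat)" where
  "path w e x = foldl (\<lambda>y a. Option.bind y (pi_letter w a)) (Some x) e"

definition m_string :: "nat \<Rightarrow> nat list \<Rightarrow> nat \<Rightarrow> nat \<Rightarrow> nat list" where
  "m_string k w m x = (THE e. length e = m \<and> set e \<subseteq> {..<k} \<and> x \<in> dom (path w e))"

definition digits :: "nat \<Rightarrow> nat \<Rightarrow> nat \<Rightarrow> nat list" where
  "digits k n x = map (\<lambda>i. x div k ^ (n - 1 - i) mod k) [0..<n]"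

end

theory Submission
  imports Defs
begin

text \<open>
  Let \<open>K = k^(n-1)\<close>. Every block of \<open>k\<close> letters of \<open>v\<close> is a
  permutation of \<open>A\<close>, so the sorted word is \<open>0^K 1^K \<dots> (k-1)^K\<close> and
  the \<open>j\<close>-th occurrence of \<open>a\<close> in \<open>v\<close> lies in block \<open>j\<close>. Hence
  \<open>\<pi>\<^sub>a\<close> is defined exactly on \<open>[aK, (a+1)K)\<close>, i.e. on the \<open>x\<close>
  whose leading base-\<open>k\<close> digit is \<open>a\<close>, and it maps \<open>aK + j\<close> to a
  number with quotient \<open>j\<close> by \<open>k\<close>: on \<open>n\<close>-digit strings, \<open>\<pi>\<^sub>a\<close>
  deletes the leading digit \<open>a\<close> and appends some digit. By induction on
  \<open>e\<close>, \<open>x \<cdot> \<pi>\<^sub>e\<close> is therefore defined iff the digits of \<open>x\<close>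
  begin with \<open>e\<close>.
\<close>

lemma positions_append:
  "positions (xs @ ys) a = positions xs a @ map (\<lambda>i. i + length xs) (positions ys a)"
proof -
  have left:
    "filter (\<lambda>i. (xs @ ys) ! i = a) [0..<length xs] = positions xs a"
    unfolding positions_def by (rule filter_cong) (auto simp: nth_append)
  have shift:
    "[length xs..<length xs + length ys] = map (\<lambda>i. i + length xs) [0..<length ys]"
    by (simp add: map_add_upt add.commute)
  have right: "filter (\<lambda>i. (xs @ ys) ! i = a) [length xs..<length xs + length ys]
      = map (\<lambda>i. i + length xs) (positions ys a)"
    unfolding positions_def shift filter_map by (simp add: o_def nth_append)
  show ?thesis
    using left right by (simp add: positions_def upt_add_eq_append[of 0])
qed

lemma length_positions: "length (positions w a) = count_list w a"
proof (induction w rule: rev_induct)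
  case (snoc x w)
  then show ?case by (simp add: positions_append) (simp add: positions_def)
qed (simp add: positions_def)

lemma set_positions: "set (positions w a) = {i. i < length w \<and> w ! i = a}"
  by (auto simp: positions_def)

lemma sorted_positions: "sorted (positions w a)"
  and distinct_positions: "distinct (positions w a)"
  by (auto simp: positions_def intro: sorted_wrt_filter)

lemma length_positions_sort: "length (positions (sort w) a) = length (positions w a)"
  by (simp add: length_positions count_list_eq_length_filter filter_sort)

lemma pi_letter_eq_Some_iff:
  "pi_letter w a x = Some y \<longleftrightarrow>
     (\<exists>i < length (positions w a). positions (sort w) a ! i = x \<and> positions w a ! i = y)"
proof -
  let ?P = "positions (sort w) a" and ?Q = "positions w a"
  have "pi_letter w a x = Some y \<longleftrightarrow> (x, y) \<in> set (zip ?P ?Q)"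
    unfolding pi_letter_def using length_positions_sort distinct_positions
    by (metis map_of_SomeD map_of_is_SomeI map_fst_zip)
  then show ?thesis
    by (auto simp: set_zip length_positions_sort)
qed

lemma dom_pi_letter: "dom (pi_letter w a) = set (positions (sort w) a)"
  by (simp add: pi_letter_def length_positions_sort)

lemma sorted_nth_less_iff:
  fixes s :: "'a::linorder list"
  assumes "sorted s" "i < length s"
  shows "s ! i < a \<longleftrightarrow> i < length (filter (\<lambda>x. x < a) s)"
  using assms
proof (induction s arbitrary: i)
  case (Cons x s)
  show ?case
  proof (cases "x < a")
    case False
    then have "filter (\<lambda>x. x < a) (x # s) = []"
      using Cons.prems(1) by (auto simp: filter_empty_conv)
    moreover have "x \<le> (x # s) ! i"
      using Cons.prems by (cases i) auto
    ultimately show ?thesis using False by simp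
  next
    case True
    then show ?thesis using Cons by (cases i) auto
  qed
qed simp

lemma positions_sorted:
  assumes "sorted s"
  shows "positions s a = [length (filter (\<lambda>x. x < a) s)..<length (filter (\<lambda>x. x < Suc a) s)]"
    (is "_ = [?lo..<?hi]")
proof (rule sorted_distinct_set_unique)
  have mem_iff: "i < length s \<and> s ! i = a \<longleftrightarrow> ?lo \<le> i \<and> i < ?hi" for i
  proof (cases "i < length s")
    case True
    have "s ! i = a \<longleftrightarrow> \<not> s ! i < a \<and> s ! i < Suc a"
      by linarith
    then show ?thesis
      using sorted_nth_less_iff[OF assms True, of a] sorted_nth_less_iff[OF assms True, of "Suc a"]
        True by (simp add: not_less)
  next
    case False
    then show ?thesis
      using length_filter_le[of "\<lambda>x. x < Suc a" s] by linarith
  qed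
  show "set (positions s a) = set [?lo..<?hi]"
    unfolding set_positions set_upt
    by (rule set_eqI) (simp only: mem_Collect_eq atLeastLessThan_iff mem_iff)
qed (simp_all add: sorted_positions distinct_positions)

lemma positions_sort:
  "positions (sort w) a = [length (filter (\<lambda>x. x < a) w)..<length (filter (\<lambda>x. x < Suc a) w)]"
  by (simp add: positions_sorted filter_sort)

lemma G_distinct_set:
  assumes "w \<in> G k"
  shows "distinct w" "set w = {..<k}"
proof -
  from assms have len: "length w = k" and sub: "set w \<subseteq> {..<k}"
    and count: "\<And>b. b < k \<Longrightarrow> count_list w b = 1"
    by (simp_all add: G_def)
  have "b \<in> set w" if "b < k" for b
    using count[OF that] by (metis count_notin zero_neq_one)
  with sub show set: "set w = {..<k}" by blast
  show "distinct w"
    by (rule card_distinct) (simp add: set len)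
qed

lemma length_filter_less_G:
  assumes "w \<in> G k" "a \<le> k"
  shows "length (filter (\<lambda>x. x < a) w) = a"
proof -
  have "{x. x < a} \<inter> set w = {..<a}"
    unfolding G_distinct_set(2)[OF assms(1)] using assms(2) by auto
  then show ?thesis
    by (simp only: distinct_length_filter[OF G_distinct_set(1)[OF assms(1)]] card_lessThan)
qed

lemma length_filter_less_concat_G:
  assumes "set ws \<subseteq> G k" "a \<le> k"
  shows "length (filter (\<lambda>x. x < a) (concat ws)) = a * length ws"
  using assms by (induction ws) (auto simp: length_filter_less_G)

lemma positions_sort_concat_G:
  assumes "set ws \<subseteq> G k" "a < k"
  shows "positions (sort (concat ws)) a = [a * length ws..<Suc a * length ws]"
  using assms by (simp add: positions_sort length_filter_less_concat_G)

lemma positions_G: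
  assumes "w \<in> G k" "a < k"
  obtains p where "p < k" "positions w a = [p]"
proof -
  have "length (positions w a) = 1"
    using assms by (simp add: length_positions G_def)
  then obtain p where p: "positions w a = [p]"
    by (auto simp: length_Suc_conv)
  then have "p < k"
    using set_positions[of w a] assms(1) by (auto simp: G_def)
  with p show thesis using that by blast
qed

lemma positions_concat_G_div:
  assumes "set ws \<subseteq> G k" "a < k"
  shows "map (\<lambda>p. p div k) (positions (concat ws) a) = [0..<length ws]"
  using assms(1)
proof (induction ws)
  case (Cons w ws)
  have w: "w \<in> G k"
    using Cons.prems by simp
  then obtain p where p: "p < k" "positions w a = [p]"
    using positions_G assms(2) by blast
  have "length w = k"
    using w by (simp add: G_def)
  moreover have "(i + k) div k = Suc (i div k)" for i
    using assms(2) by (simp add: div_add_self2)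
  ultimately have "map (\<lambda>p. p div k) (positions (concat (w # ws)) a)
      = 0 # map Suc (map (\<lambda>p. p div k) (positions (concat ws) a))"
    using p by (simp add: positions_append)
  also have "\<dots> = 0 # map Suc [0..<length ws]"
    using Cons by simp
  also have "\<dots> = [0..<length (w # ws)]"
    by (simp only: length_Cons map_Suc_upt upt_conv_Cons[OF zero_less_Suc])
  finally show ?case .
qed (simp add: positions_def)

lemma dom_pi_letter_Gamma:
  assumes "v \<in> Gamma k (Suc n)" "a < k"
  shows "dom (pi_letter v a) = {x. x div k ^ n = a}"
proof -
  obtain ws where v: "v = concat ws" and len: "length ws = k ^ n" and ws: "set ws \<subseteq> G k"
    using assms(1) by (auto simp: Gamma_def)
  have "0 < k ^ n"
    using assms(2) by simp
  then have div_iff: "x div k ^ n = a \<longleftrightarrow> a * k ^ n \<le> x \<and> x < Suc a * k ^ n" for x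
    by (meson div_less_iff_less_mult div_times_less_eq_dividend le_less_Suc_eq
        less_eq_div_iff_mult_less_eq)
  have "dom (pi_letter v a) = {a * k ^ n..<Suc a * k ^ n}"
    using positions_sort_concat_G[OF ws assms(2)] by (simp add: dom_pi_letter v len)
  also have "\<dots> = {x. x div k ^ n = a}"
    by (simp only: set_eq_iff atLeastLessThan_iff mem_Collect_eq div_iff simp_thms)
  finally show ?thesis .
qed

lemma pi_letter_Gamma_div:
  assumes "v \<in> Gamma k (Suc n)" "a < k" "pi_letter v a x = Some y"
  shows "y div k = x mod k ^ n"
proof -
  obtain ws where v: "v = concat ws" and len: "length ws = k ^ n" and ws: "set ws \<subseteq> G k"
    using assms(1) by (auto simp: Gamma_def)
  obtain i where i: "i < length (positions v a)"
    and x: "positions (sort v) a ! i = x" and y: "positions v a ! i = y"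
    using assms(3) pi_letter_eq_Some_iff by blast
  have sorted_occurrences: "positions (sort v) a = [a * k ^ n..<Suc a * k ^ n]"
    using positions_sort_concat_G[OF ws assms(2)] by (simp add: v len)
  then have "i < k ^ n"
    using i length_positions_sort[of v a] by simp
  have "y div k = map (\<lambda>p. p div k) (positions v a) ! i"
    using i y by simp
  also have "\<dots> = i"
    using positions_concat_G_div[OF ws assms(2)] \<open>i < k ^ n\<close> by (simp add: v len)
  also have "\<dots> = x mod k ^ n"
    using sorted_occurrences x \<open>i < k ^ n\<close> by auto
  finally show ?thesis .
qed

lemma length_digits [simp]: "length (digits k n x) = n"
  by (simp add: digits_def)

lemma set_digits: "0 < k \<Longrightarrow> set (digits k n x) \<subseteq> {..<k}"
  by (auto simp: digits_def)

lemma digits_Suc_Cons: "digits k (Suc n) x = x div k ^ n mod k # digits k n x"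
  unfolding digits_def by (simp add: upt_conv_Cons map_Suc_upt[symmetric] del: upt_Suc)

lemma digits_Suc_snoc: "digits k (Suc n) x = digits k n (x div k) @ [x mod k]"
proof -
  have "x div k ^ (n - i) = x div k div k ^ (n - 1 - i)" if "i < n" for i
  proof -
    have "n - i = Suc (n - 1 - i)"
      using that by simp
    then show ?thesis
      by (simp add: div_mult2_eq)
  qed
  then show ?thesis
    unfolding digits_def by simp
qed

lemma digits_mod_power: "digits k n (x mod k ^ n) = digits k n x"
proof (induction n arbitrary: x)
  case (Suc n)
  have head: "x mod k ^ Suc n div k ^ n = x div k ^ n mod k"
  proof (cases "k = 0")
    case False
    have "x mod k ^ Suc n = k ^ n * (x div k ^ n mod k) + x mod k ^ n"
      by (simp only: power_Suc2 mod_mult2_eq)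
    then show ?thesis
      using False by simp
  qed (cases n; simp)
  have "x mod k ^ Suc n mod k ^ n = x mod k ^ n"
    by (simp add: mod_mod_cancel)
  then have tail: "digits k n (x mod k ^ Suc n) = digits k n x"
    by (metis Suc.IH)
  show ?case
    using head tail by (simp add: digits_Suc_Cons)
qed (simp add: digits_def)

lemma digits_shift:
  assumes "y div k = x mod k ^ n"
  shows "digits k (Suc n) y = digits k n x @ [y mod k]"
  using assms by (simp add: digits_Suc_snoc digits_mod_power)

lemma inj_on_digits: "inj_on (digits k n) {..<k ^ n}"
proof (induction n)
  case (Suc n)
  show ?case
  proof (rule inj_onI)
    fix x y
    assume x: "x \<in> {..<k ^ Suc n}" and y: "y \<in> {..<k ^ Suc n}"
      and eq: "digits k (Suc n) x = digits k (Suc n) y"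
    have "0 < k"
      using x by (cases k) auto
    have head: "x div k ^ n mod k = y div k ^ n mod k" and tail: "digits k n x = digits k n y"
      using eq by (simp_all add: digits_Suc_Cons)
    have "x div k ^ n < k" "y div k ^ n < k"
      using x y by (simp_all add: less_mult_imp_div_less)
    then have "x div k ^ n = y div k ^ n"
      using head by simp
    moreover have "x mod k ^ n = y mod k ^ n"
    proof (rule inj_onD[OF Suc.IH])
      show "digits k n (x mod k ^ n) = digits k n (y mod k ^ n)"
        using tail by (simp add: digits_mod_power)
      show "x mod k ^ n \<in> {..<k ^ n}" "y mod k ^ n \<in> {..<k ^ n}"
        using \<open>0 < k\<close> by simp_all
    qed
    ultimately show "x = y"
      by (metis div_mult_mod_eq)
  qed
qed (simp add: inj_on_def)

lemma foldl_bind_None: "foldl (\<lambda>y a. Option.bind y (f a)) None e = None"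
  by (induction e) auto

lemma path_Nil: "path w [] x = Some x"
  by (simp add: path_def)

lemma path_Cons: "path w (a # e) x = Option.bind (pi_letter w a x) (path w e)"
  by (cases "pi_letter w a x") (simp_all add: path_def foldl_bind_None)

lemma dom_path_Cons:
  "x \<in> dom (path w (a # e)) \<longleftrightarrow> (\<exists>y. pi_letter w a x = Some y \<and> y \<in> dom (path w e))"
  by (cases "pi_letter w a x") (simp_all add: domIff path_Cons)

lemma mem_dom_path_Gamma_iff:
  assumes v: "v \<in> Gamma k n" and "set e \<subseteq> {..<k}" "length e \<le> n" "x < k ^ n"
  shows "x \<in> dom (path v e) \<longleftrightarrow> take (length e) (digits k n x) = e"
  using assms(2-4)
proof (induction e arbitrary: x)
  case Nil
  then show ?case by (simp add: path_Nil)
next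
  case (Cons a e)
  then obtain n' where n: "n = Suc n'"
    by (cases n) auto
  have a: "a < k" and len: "length e \<le> n'"
    using Cons.prems n by auto
  have v': "v \<in> Gamma k (Suc n')"
    using v n by simp
  have "x div k ^ n' < k"
    using Cons.prems(3) n by (simp add: less_mult_imp_div_less)
  then have x_digits: "digits k n x = x div k ^ n' # digits k n' x"
    using n by (simp add: digits_Suc_Cons)
  show ?case
  proof (cases "x div k ^ n' = a")
    case False
    then have "x \<notin> dom (pi_letter v a)"
      using dom_pi_letter_Gamma[OF v' a] by simp
    then show ?thesis
      using False x_digits by (auto simp: dom_path_Cons)
  next
    case True
    then obtain y where y: "pi_letter v a x = Some y"
      using dom_pi_letter_Gamma[OF v' a] by blast
    have y_div: "y div k = x mod k ^ n'"
      by (rule pi_letter_Gamma_div[OF v' a y])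
    then have y_digits: "digits k n y = digits k n' x @ [y mod k]"
      using n by (simp add: digits_shift)
    have "y div k < k ^ n'"
      using y_div a by simp
    then have "y < k ^ n"
      using n a by (simp add: div_less_iff_less_mult mult.commute)
    have "x \<in> dom (path v (a # e)) \<longleftrightarrow> y \<in> dom (path v e)"
      using y by (simp add: dom_path_Cons)
    also have "\<dots> \<longleftrightarrow> take (length e) (digits k n y) = e"
      using Cons.IH Cons.prems(1,2) \<open>y < k ^ n\<close> by simp
    also have "\<dots> \<longleftrightarrow> take (length (a # e)) (digits k n x) = a # e"
      using y_digits x_digits True len by simp
    finally show ?thesis .
  qed
qed

lemma dom_path_Gamma:
  assumes v: "v \<in> Gamma k n" and "set e \<subseteq> {..<k}" "e \<noteq> []" "length e \<le> n"
  shows "dom (path v e) = {x. x < k ^ n \<and> take (length e) (digits k n x) = e}"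
proof -
  obtain a e' where e: "e = a # e'"
    using assms(3) by (cases e) auto
  then obtain n' where n: "n = Suc n'"
    using assms(4) by (cases n) auto
  have "x < k ^ n" if "x \<in> dom (path v e)" for x
  proof -
    have "x \<in> dom (pi_letter v a)"
      using that e by (auto simp: dom_path_Cons)
    then have "x div k ^ n' < k"
      using dom_pi_letter_Gamma[of v k n' a] v assms(2) e n by simp
    then show ?thesis
      using n assms(2) e by (simp add: div_less_iff_less_mult)
  qed
  then show ?thesis
    using mem_dom_path_Gamma_iff[OF v assms(2,4)] by blast
qed

lemma m_string_Gamma:
  assumes v: "v \<in> Gamma k n" and "0 < k" "m \<le> n" "x < k ^ n"
  shows "m_string k v m x = take m (digits k n x)"
  unfolding m_string_def
proof (rule the_equality)
  have "set (take m (digits k n x)) \<subseteq> {..<k}"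
    using set_digits[OF assms(2), of n x] set_take_subset[of m "digits k n x"] by blast
  then show "length (take m (digits k n x)) = m \<and> set (take m (digits k n x)) \<subseteq> {..<k}
      \<and> x \<in> dom (path v (take m (digits k n x)))"
    using mem_dom_path_Gamma_iff[OF v _ _ assms(4)] assms(3) by simp
  show "e = take m (digits k n x)"
    if "length e = m \<and> set e \<subseteq> {..<k} \<and> x \<in> dom (path v e)" for e
    using that mem_dom_path_Gamma_iff[OF v, of e x] assms(3,4) by simp
qed

lemma dom_path_Gamma_digits:
  assumes v: "v \<in> Gamma k n" and "0 < k" "0 < n" "x < k ^ n"
  shows "dom (path v (digits k n x)) = {x}"
proof -
  have "set (digits k n x) \<subseteq> {..<k}" "digits k n x \<noteq> []"
    using assms(2,3) set_digits[of k n x] by (auto simp flip: length_0_conv)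
  then have "dom (path v (digits k n x)) = {y. y < k ^ n \<and> digits k n y = digits k n x}"
    using dom_path_Gamma[OF v] by simp
  also have "\<dots> = {x}"
    using inj_on_digits[of k n] assms(4) by (auto simp: inj_on_def)
  finally show ?thesis .
qed

theorem lemma3p7:
  fixes k n m :: nat and v e :: "nat list"
  assumes "k \<ge> 2" and "n \<ge> 1" and "v \<in> Gamma k n"
    and "1 \<le> m" and "m \<le> n" and "length e = m" and "set e \<subseteq> {..<k}"
  shows "(\<forall>x < k ^ n. take m (digits k n x) = e \<longrightarrow> m_string k v m x = e)
       \<and> dom (path v e) = {x. x < k ^ n \<and> take m (digits k n x) = e}
       \<and> (\<forall>x < k ^ n. dom (path v (digits k n x)) = {x})"
proof -
  have "0 < k" "e \<noteq> []"
    using assms(1,4,6) by auto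
  then have "dom (path v e) = {x. x < k ^ n \<and> take m (digits k n x) = e}"
    using dom_path_Gamma[OF assms(3,7)] assms(5,6) by simp
  then show ?thesis
    using m_string_Gamma[OF assms(3) \<open>0 < k\<close> assms(5)]
      dom_path_Gamma_digits[OF assms(3) \<open>0 < k\<close>] assms(2) by auto
qed

end
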